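(* Let $|\phi_{\mathrm w}(\theta)\rangle$ be the 2-d Ising whip state on $\Lambda_L$ ($L\ge2$). Let $\mathcal B$ be the set of sites of $\Lambda_L$ having at least one coordinate in $\{0,L-1\}$, excluding $(0,0)$ and $(L-1,L-1)$, and $\hat T=\prod_{i\in\mathcal B}Z_i$. Then for all $\theta$ there is a phase $\phi\in\mathbb R$ with $$|\phi_{\mathrm w}(\theta+\pi)\rangle=e^{\mathrm i\phi}\,\hat T\,|\phi_{\mathrm w}(\theta)\rangle.$$ Moreover, with $\partial X=\sum_{i\in\mathcal B'}X_i$, $\mathcal B'=\{(L-1,b):0\le b\le L-2\}\cup\{(a,L-1):0\le a\le L-2\}\subseteq\mathcal B$, one has $\hat T\,\partial X=-\partial X\,\hat T$; in particular $\langle\partial X\rangle_{\theta+\pi}=-\langle\partial X\rangle_\theta$ while $\langle Z_iZ_j\rangle_{\theta+\pi}=\langle Z_iZ_j\rangle_\theta$ for all sites $i,j$.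
   Context: 2-d Ising whip circuit: for $L\ge2$, $\Lambda_L=\{0,\dots,L-1\}^2$, one qubit per site, $N=L^2$. Directed edges $(a,b)\to(a+1,b)$ and $(a,b)\to(a,b+1)$ whenever the target lies in $\Lambda_L$. $\deg^-(v)$ is the number of incoming edges of $v$. For each edge $u\to v$ let $G_{u\to v}(\theta)=\exp(-\mathrm i\,\theta\,Z_uY_v/\deg^-(v))$ with Pauli matrices $X,Y,Z$. The whip state is $|\phi_{\mathrm w}(\theta)\rangle=\prod G_{u\to v}(\theta)|+\rangle^{\otimes N}$, $|+\rangle=(|0\rangle+|1\rangle)/\sqrt2$, with gates applied in order of increasing $a+b$ of the target $v=(a,b)$. $\langle A\rangle_\theta=\langle\phi_{\mathrm w}(\theta)|A|\phi_{\mathrm w}(\theta)\rangle$. *)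

theory Defs
  imports Complex_Main
begin

text \<open>A computational basis configuration is the set of sites
  in state 1. A state vector is a function from configurations to amplitudes; all states
  considered are supported on configurations contained in the lattice.\<close>

type_synonym site = "nat \<times> nat"
type_synonym state = "site set \<Rightarrow> complex"
type_synonym op = "state \<Rightarrow> state"

definition sites :: "nat \<Rightarrow> site set" where
  "sites L = {0..<L} \<times> {0..<L}"

definition flip :: "site \<Rightarrow> site set \<Rightarrow> site set" where
  "flip u s = (if u \<in> s then s - {u} else insert u s)"

definition pauliZ :: "site \<Rightarrow> op" where
  "pauliZ u \<psi> = (\<lambda>s. (if u \<in> s then -1 else 1) * \<psi> s)"

definition pauliX :: "site \<Rightarrow> op" where
  "pauliX u \<psi> = (\<lambda>s. \<psi> (flip u s))"

text \<open>Y|0> = i|1>, Y|1> = -i|0>.\<close>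
definition pauliY :: "site \<Rightarrow> op" where
  "pauliY u \<psi> = (\<lambda>s. (if u \<in> s then \<i> else - \<i>) * \<psi> (flip u s))"

definition smult_op :: "complex \<Rightarrow> op \<Rightarrow> op" where
  "smult_op c A \<psi> = (\<lambda>s. c * A \<psi> s)"

definition op_exp :: "op \<Rightarrow> op" where
  "op_exp A \<psi> = (\<lambda>s. (\<Sum>n. ((A ^^ n) \<psi>) s / of_nat (fact n)))"

definition Zprod :: "site set \<Rightarrow> op" where
  "Zprod S \<psi> = (\<lambda>s. (\<Prod>i\<in>S. if i \<in> s then -1 else 1) * \<psi> s)"

definition indeg :: "site \<Rightarrow> nat" where
  "indeg v = (if fst v > 0 then 1 else 0) + (if snd v > 0 then 1 else 0)"

definition in_edges :: "site \<Rightarrow> (site \<times> site) list" where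
  "in_edges v = (case v of (a,b) \<Rightarrow>
      (if a > 0 then [((a-1,b),(a,b))] else []) @ (if b > 0 then [((a,b-1),(a,b))] else []))"

text \<open>All directed edges, listed by increasing level a+b of the target (level k = 1..2L-2).\<close>
definition edges :: "nat \<Rightarrow> (site \<times> site) list" where
  "edges L = concat (map (\<lambda>k. concat (map (\<lambda>a. in_edges (a, k - a))
                 (filter (\<lambda>a. a \<le> k \<and> k - a < L) [0..<L]))) [1..<2*L-1])"

definition gate :: "real \<Rightarrow> site \<times> site \<Rightarrow> op" where
  "gate \<theta> e = (case e of (u,v) \<Rightarrow>
      op_exp (smult_op (- \<i> * complex_of_real (\<theta> / real (indeg v))) (pauliZ u \<circ> pauliY v)))"

definition plus_state :: "nat \<Rightarrow> state" where
  "plus_state L = (\<lambda>s. if s \<subseteq> sites L then complex_of_real (1 / sqrt (2 ^ (L^2))) else 0)"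

text \<open>Gates applied in list order: the first edge of the list acts first.\<close>
definition whip :: "nat \<Rightarrow> real \<Rightarrow> state" where
  "whip L \<theta> = fold (\<lambda>e \<psi>. gate \<theta> e \<psi>) (edges L) (plus_state L)"

definition expect :: "nat \<Rightarrow> op \<Rightarrow> state \<Rightarrow> complex" where
  "expect L A \<psi> = (\<Sum>s\<in>Pow (sites L). cnj (\<psi> s) * A \<psi> s)"

definition bdry :: "nat \<Rightarrow> site set" where
  "bdry L = {v \<in> sites L. fst v \<in> {0, L-1} \<or> snd v \<in> {0, L-1}} - {(0,0), (L-1, L-1)}"

definition bdry' :: "nat \<Rightarrow> site set" where
  "bdry' L = {(L-1, b) | b. b \<le> L - 2} \<union> {(a, L-1) | a. a \<le> L - 2}"

definition Tz :: "nat \<Rightarrow> op" where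
  "Tz L = Zprod (bdry L)"

definition dX :: "nat \<Rightarrow> op" where
  "dX L \<psi> = (\<lambda>s. \<Sum>i\<in>bdry' L. pauliX i \<psi> s)"

end

theory Submission
  imports Defs "HOL-Analysis.Complex_Transcendental"
begin

(* Since Z_u Y_v is an involution, each gate is
   exp(-i alpha Z_u Y_v) = cos alpha - i sin alpha Z_u Y_v.
   Replacing theta by theta + pi shifts alpha by pi for the single gate into a site on an axis,
   which multiplies it by -1, and by pi/2 for each of the two gates into an interior site
   v = (a,b), which multiplies each of them by -i Z_u Y_v.  These factors commute past the
   other gate into v and multiply to -Z_(a-1,b) Z_(a,b-1).  Such Z factors live on sites of
   level a + b smaller than that of v, so they commute with all later gates and can be
   collected in front of the state.  A site is hit once for each of its upper neighbours
   (a+1,b), (a,b+1) that is interior, which happens an odd number of times exactly on the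
   boundary minus the two corners: the collected product is T up to (-1)^(L^2-1).  Finally T
   anticommutes with each X on the boundary and commutes with every Z. *)

lemma fold_concat: "fold f (concat xss) = fold (fold f) xss"
  by (induction xss) simp_all

lemma sorted_wrt_concat_map_fibres:
  assumes "sorted ks" and "\<And>k x. k \<in> set ks \<Longrightarrow> x \<in> set (g k) \<Longrightarrow> f x = k"
  shows "sorted_wrt (\<lambda>x y. f x \<le> f y) (concat (map g ks))"
  using assms
proof (induction ks)
  case (Cons k ks)
  have "sorted_wrt (\<lambda>x y. f x \<le> f y) (g k)"
    using Cons.prems(2)
    by (intro sorted_wrt_mono_rel[OF _ sorted_wrt_true]) (metis list.set_intros(1) order_refl)
  moreover have "f x \<le> f y" if "x \<in> set (g k)" "y \<in> set (concat (map g ks))" for x y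
    using Cons.prems that by fastforce
  ultimately show ?case
    using Cons by (simp add: sorted_wrt_append)
qed simp

lemma distinct_concat_map_fibres:
  assumes "distinct ks" and "\<And>k. k \<in> set ks \<Longrightarrow> distinct (g k)"
    and "\<And>k x. k \<in> set ks \<Longrightarrow> x \<in> set (g k) \<Longrightarrow> f x = k"
  shows "distinct (concat (map g ks))"
  using assms by (induction ks) (auto, metis)

lemma prod_mult_prod_sym_diff:
  fixes f :: "'a \<Rightarrow> 'b :: comm_monoid_mult"
  assumes "finite A" "finite B" "\<And>x. f x * f x = 1"
  shows "prod f A * prod f B = prod f (sym_diff A B)"
proof -
  have "prod f A * prod f B = (prod f (A \<inter> B) * prod f (A \<inter> B)) * (prod f (A - B) * prod f (B - A))"
    using prod.Int_Diff[OF assms(1), of f B] prod.Int_Diff[OF assms(2), of f A]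
    by (simp add: Int_commute ac_simps)
  also have "prod f (A \<inter> B) * prod f (A \<inter> B) = 1"
    by (simp add: assms(3) flip: prod.distrib)
  also have "prod f (A - B) * prod f (B - A) = prod f (sym_diff A B)"
    using assms by (intro prod.union_disjoint[symmetric]) auto
  finally show ?thesis
    by simp
qed

section \<open>Exponentials of involutions\<close>

lemma funpow_smult_op_involution:
  assumes hom: "\<And>c \<psi>. A (\<lambda>s. c * \<psi> s) = (\<lambda>s. c * A \<psi> s)"
    and inv: "\<And>\<psi>. A (A \<psi>) = \<psi>"
  shows "(smult_op c A ^^ n) \<psi> = (\<lambda>s. c ^ n * (if even n then \<psi> else A \<psi>) s)"
proof (induction n)
  case 0
  show ?case by simp
next
  case (Suc n)
  have "(smult_op c A ^^ Suc n) \<psi> = smult_op c A (\<lambda>s. c ^ n * (if even n then \<psi> else A \<psi>) s)"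
    by (simp only: funpow.simps comp_apply Suc.IH)
  also have "\<dots> = (\<lambda>s. c * c ^ n * A (if even n then \<psi> else A \<psi>) s)"
    by (simp add: smult_op_def hom mult.assoc)
  also have "\<dots> = (\<lambda>s. c ^ Suc n * (if even (Suc n) then \<psi> else A \<psi>) s)"
    by (cases "even n") (simp_all add: inv)
  finally show ?case .
qed

lemma op_exp_smult_op_involution:
  assumes "\<And>c \<psi>. A (\<lambda>s. c * \<psi> s) = (\<lambda>s. c * A \<psi> s)"
    and "\<And>\<psi>. A (A \<psi>) = \<psi>"
  shows "op_exp (smult_op c A) \<psi> = (\<lambda>s. cosh c * \<psi> s + sinh c * A \<psi> s)"
proof (rule ext)
  fix s
  have "(\<lambda>n. (if even n then c ^ n /\<^sub>R fact n else 0) * \<psi> s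
            + (if even n then 0 else c ^ n /\<^sub>R fact n) * A \<psi> s)
        sums (cosh c * \<psi> s + sinh c * A \<psi> s)"
    by (intro sums_add sums_mult2 cosh_converges sinh_converges)
  moreover have "(\<lambda>n. ((smult_op c A ^^ n) \<psi>) s / of_nat (fact n))
      = (\<lambda>n. (if even n then c ^ n /\<^sub>R fact n else 0) * \<psi> s
            + (if even n then 0 else c ^ n /\<^sub>R fact n) * A \<psi> s)"
    by (simp add: funpow_smult_op_involution assms scaleR_conv_of_real divide_inverse fun_eq_iff)
  ultimately show "op_exp (smult_op c A) \<psi> s = cosh c * \<psi> s + sinh c * A \<psi> s"
    unfolding op_exp_def by (simp add: sums_iff)
qed

lemma exp_i_times_nat_pi: "exp (\<i> * complex_of_real (real n * pi)) = (-1) ^ n"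
proof -
  have "\<i> * complex_of_real (real n * pi) = of_nat n * (\<i> * pi)"
    by simp
  then show ?thesis
    by (simp only: exp_of_nat_mult exp_pi_i')
qed

definition zsign :: "site \<Rightarrow> site set \<Rightarrow> complex" where
  "zsign u s = (if u \<in> s then -1 else 1)"

definition diag_op :: "(site set \<Rightarrow> complex) \<Rightarrow> op" where
  "diag_op \<sigma> \<psi> = (\<lambda>s. \<sigma> s * \<psi> s)"

lemma diag_op_diag_op: "diag_op \<sigma> (diag_op \<tau> \<psi>) = diag_op (\<lambda>s. \<sigma> s * \<tau> s) \<psi>"
  by (simp add: diag_op_def fun_eq_iff)

lemma flip_flip [simp]: "flip v (flip v s) = s"
  unfolding flip_def by auto

lemma mem_flip: "u \<in> flip v s \<longleftrightarrow> (if u = v then u \<notin> s else u \<in> s)"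
  unfolding flip_def by auto

lemma zsign_flip: "zsign u (flip v s) = (if u = v then - zsign u s else zsign u s)"
  unfolding zsign_def by (simp add: mem_flip)

lemma zsign_mult_self [simp]: "zsign u s * zsign u s = 1"
  unfolding zsign_def by simp

lemma cnj_zsign [simp]: "cnj (zsign u s) = zsign u s"
  unfolding zsign_def by simp

lemma prod_zsign_flip:
  assumes "finite S" "i \<in> S"
  shows "(\<Prod>j\<in>S. zsign j (flip i s)) = - (\<Prod>j\<in>S. zsign j s)"
proof -
  have "(\<Prod>j\<in>S - {i}. zsign j (flip i s)) = (\<Prod>j\<in>S - {i}. zsign j s)"
    by (rule prod.cong) (auto simp: zsign_flip)
  then show ?thesis
    using assms by (simp add: prod.remove zsign_flip)
qed

lemma pauliZ_eq_diag_op: "pauliZ u = diag_op (zsign u)"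
  unfolding pauliZ_def diag_op_def zsign_def by (simp add: fun_eq_iff)

lemma Zprod_eq_diag_op: "Zprod S = diag_op (\<lambda>s. \<Prod>i\<in>S. zsign i s)"
  unfolding Zprod_def diag_op_def zsign_def by (simp add: fun_eq_iff)

lemma pauliZ_pauliY_apply:
  "pauliZ u (pauliY v \<psi>) s = zsign u s * (if v \<in> s then \<i> else - \<i>) * \<psi> (flip v s)"
  unfolding pauliZ_def pauliY_def zsign_def by simp

lemma pauliZ_pauliY_involutive:
  "u \<noteq> v \<Longrightarrow> (pauliZ u \<circ> pauliY v) ((pauliZ u \<circ> pauliY v) \<psi>) = \<psi>"
  by (rule ext) (auto simp: pauliZ_pauliY_apply zsign_flip mem_flip algebra_simps)

lemma pauliZ_pauliY_homogeneous:
  "(pauliZ u \<circ> pauliY v) (\<lambda>s. c * \<psi> s) = (\<lambda>s. c * (pauliZ u \<circ> pauliY v) \<psi> s)"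
  by (rule ext) (simp add: pauliZ_pauliY_apply)

lemma pauliZ_pauliY_diag_op_commute:
  "(\<And>s. \<sigma> (flip v s) = \<sigma> s) \<Longrightarrow>
    pauliZ u (pauliY v (diag_op \<sigma> \<psi>)) = diag_op \<sigma> (pauliZ u (pauliY v \<psi>))"
  by (rule ext) (simp add: pauliZ_pauliY_apply diag_op_def)

lemma pauliZ_pauliY_twice:
  "u \<noteq> v \<Longrightarrow> u' \<noteq> v \<Longrightarrow>
    pauliZ u' (pauliY v (pauliZ u (pauliY v \<psi>))) = diag_op (\<lambda>s. zsign u s * zsign u' s) \<psi>"
  by (intro ext) (auto simp: diag_op_def pauliZ_pauliY_apply zsign_flip mem_flip algebra_simps)

section \<open>The gates and the shift of the angle by pi\<close>

definition rot :: "real \<Rightarrow> site \<Rightarrow> site \<Rightarrow> op" where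
  "rot \<alpha> u v \<psi> = (\<lambda>s. of_real (cos \<alpha>) * \<psi> s - \<i> * of_real (sin \<alpha>) * pauliZ u (pauliY v \<psi>) s)"

lemma gate_eq_rot:
  assumes "u \<noteq> v"
  shows "gate \<theta> (u, v) = rot (\<theta> / indeg v) u v"
proof (intro ext)
  fix \<psi> :: state and s
  define \<alpha> where "\<alpha> = \<theta> / indeg v"
  have "gate \<theta> (u, v) \<psi> = op_exp (smult_op (- \<i> * \<alpha>) (pauliZ u \<circ> pauliY v)) \<psi>"
    by (simp add: gate_def \<alpha>_def)
  also have "\<dots> = (\<lambda>s. cosh (- \<i> * \<alpha>) * \<psi> s + sinh (- \<i> * \<alpha>) * (pauliZ u \<circ> pauliY v) \<psi> s)"
    by (rule op_exp_smult_op_involution)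
      (use pauliZ_pauliY_homogeneous pauliZ_pauliY_involutive[OF assms] in auto)
  moreover have "cosh (- \<i> * \<alpha>) = cos \<alpha>" "sinh (- \<i> * \<alpha>) = - \<i> * sin \<alpha>"
    by (simp_all add: cosh_conv_cos sinh_conv_sin cos_of_real sin_of_real)
  ultimately show "gate \<theta> (u, v) \<psi> s = rot (\<theta> / indeg v) u v \<psi> s"
    by (simp add: rot_def \<alpha>_def)
qed

lemma rot_diag_op_commute:
  "(\<And>s. \<sigma> (flip v s) = \<sigma> s) \<Longrightarrow> rot \<alpha> u v (diag_op \<sigma> \<psi>) = diag_op \<sigma> (rot \<alpha> u v \<psi>)"
  by (rule ext) (simp add: rot_def pauliZ_pauliY_apply diag_op_def algebra_simps)

lemma rot_pauliZ_pauliY_commute: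
  "u \<noteq> v \<Longrightarrow> u' \<noteq> v \<Longrightarrow>
    rot \<alpha> u' v (pauliZ u (pauliY v \<psi>)) = pauliZ u (pauliY v (rot \<alpha> u' v \<psi>))"
  by (intro ext) (auto simp: rot_def pauliZ_pauliY_apply zsign_flip mem_flip algebra_simps)

lemma rot_add_pi: "rot (\<alpha> + pi) u v \<psi> = diag_op (\<lambda>_. -1) (rot \<alpha> u v \<psi>)"
  by (rule ext) (simp add: rot_def diag_op_def)

lemma rot_add_pi_half:
  assumes "u \<noteq> v"
  shows "rot (\<alpha> + pi / 2) u v \<psi> = diag_op (\<lambda>_. - \<i>) (pauliZ u (pauliY v (rot \<alpha> u v \<psi>)))"
  using assms
  by (intro ext)
    (auto simp: rot_def diag_op_def cos_add sin_add pauliZ_pauliY_apply zsign_flip mem_flip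
      algebra_simps)

definition block :: "real \<Rightarrow> site \<Rightarrow> op" where
  "block \<theta> v = fold (gate \<theta>) (in_edges v)"

lemma block_origin: "block \<theta> (0, 0) = id"
  by (simp add: block_def in_edges_def)

lemma block_axis:
  "0 < a \<Longrightarrow> block \<theta> (a, 0) = rot \<theta> (a - 1, 0) (a, 0)"
  "0 < b \<Longrightarrow> block \<theta> (0, b) = rot \<theta> (0, b - 1) (0, b)"
  by (simp_all add: block_def in_edges_def gate_eq_rot indeg_def)

lemma block_interior:
  "0 < a \<Longrightarrow> 0 < b \<Longrightarrow>
    block \<theta> (a, b) \<psi> = rot (\<theta> / 2) (a, b - 1) (a, b) (rot (\<theta> / 2) (a - 1, b) (a, b) \<psi>)"
  by (simp add: block_def in_edges_def gate_eq_rot indeg_def)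

lemma block_diag_op_commute:
  assumes "\<And>s. \<sigma> (flip v s) = \<sigma> s"
  shows "block \<theta> v (diag_op \<sigma> \<psi>) = diag_op \<sigma> (block \<theta> v \<psi>)"
proof -
  obtain a b where v: "v = (a, b)" by fastforce
  show ?thesis
    using assms unfolding v
    by (cases "a = 0"; cases "b = 0")
      (simp_all add: block_origin block_axis block_interior rot_diag_op_commute)
qed

definition block_sign :: "site \<Rightarrow> site set \<Rightarrow> complex" where
  "block_sign v s = (if 0 < fst v \<and> 0 < snd v
                     then - zsign (fst v - 1, snd v) s * zsign (fst v, snd v - 1) s else -1)"

lemma block_add_pi:
  assumes "v \<noteq> (0, 0)"
  shows "block (\<theta> + pi) v \<psi> = diag_op (block_sign v) (block \<theta> v \<psi>)"
proof -
  obtain a b where v: "v = (a, b)" by fastforce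
  consider "0 < a" "0 < b" | "a = 0" "0 < b" | "0 < a" "b = 0"
    using assms v by fastforce
  then show ?thesis
  proof cases
    case 1
    define u\<^sub>1 u\<^sub>2 \<alpha> where "u\<^sub>1 = (a - 1, b)" and "u\<^sub>2 = (a, b - 1)" and "\<alpha> = \<theta> / 2"
    have u: "u\<^sub>1 \<noteq> v" "u\<^sub>2 \<noteq> v" using 1 by (auto simp: v u\<^sub>1_def u\<^sub>2_def)
    have "block (\<theta> + pi) v \<psi> = rot (\<alpha> + pi / 2) u\<^sub>2 v (rot (\<alpha> + pi / 2) u\<^sub>1 v \<psi>)"
      using 1 by (simp add: v block_interior u\<^sub>1_def u\<^sub>2_def \<alpha>_def add_divide_distrib)
    also have "\<dots> = diag_op (\<lambda>_. - \<i>) (pauliZ u\<^sub>2 (pauliY v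
                      (rot \<alpha> u\<^sub>2 v (diag_op (\<lambda>_. - \<i>) (pauliZ u\<^sub>1 (pauliY v (rot \<alpha> u\<^sub>1 v \<psi>)))))))"
      using u by (simp add: rot_add_pi_half)
    also have "\<dots> = diag_op (\<lambda>_. - \<i>) (diag_op (\<lambda>_. - \<i>)
                      (pauliZ u\<^sub>2 (pauliY v (pauliZ u\<^sub>1 (pauliY v (rot \<alpha> u\<^sub>2 v (rot \<alpha> u\<^sub>1 v \<psi>)))))))"
      using u by (simp add: rot_diag_op_commute pauliZ_pauliY_diag_op_commute rot_pauliZ_pauliY_commute)
    also have "\<dots> = diag_op (block_sign v) (block \<theta> v \<psi>)"
      using 1 u by (simp add: pauliZ_pauliY_twice diag_op_diag_op block_interior block_sign_def
                              v u\<^sub>1_def u\<^sub>2_def \<alpha>_def diag_op_def)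
    finally show ?thesis .
  qed (simp_all add: v block_axis rot_add_pi block_sign_def diag_op_def)
qed

definition level :: "site \<Rightarrow> nat" where
  "level v = fst v + snd v"

lemma block_sign_flip: "level v \<le> level w \<Longrightarrow> block_sign v (flip w s) = block_sign v s"
  by (cases v; cases w) (auto simp: block_sign_def level_def zsign_flip)

lemma fold_block_add_pi:
  assumes "sorted_wrt (\<lambda>v w. level v \<le> level w) vs" "(0, 0) \<notin> set vs"
    and "\<And>w s. w \<in> set vs \<Longrightarrow> \<sigma> (flip w s) = \<sigma> s"
  shows "fold (block (\<theta> + pi)) vs (diag_op \<sigma> \<psi>)
           = diag_op (\<lambda>s. \<sigma> s * (\<Prod>v\<leftarrow>vs. block_sign v s)) (fold (block \<theta>) vs \<psi>)"
  using assms
proof (induction vs arbitrary: \<sigma> \<psi>)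
  case Nil
  show ?case by (simp add: diag_op_def)
next
  case (Cons v vs)
  have "v \<noteq> (0, 0)"
    using Cons.prems(2) by auto
  have "block (\<theta> + pi) v (diag_op \<sigma> \<psi>) = diag_op \<sigma> (block (\<theta> + pi) v \<psi>)"
    using Cons.prems(3) by (simp add: block_diag_op_commute)
  also have "\<dots> = diag_op (\<lambda>s. \<sigma> s * block_sign v s) (block \<theta> v \<psi>)"
    using \<open>v \<noteq> (0, 0)\<close> by (simp add: block_add_pi diag_op_diag_op)
  finally have "block (\<theta> + pi) v (diag_op \<sigma> \<psi>) = diag_op (\<lambda>s. \<sigma> s * block_sign v s) (block \<theta> v \<psi>)" .
  moreover have "\<sigma> (flip w s) * block_sign v (flip w s) = \<sigma> s * block_sign v s" if "w \<in> set vs" for w s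
    using Cons.prems that by (simp add: block_sign_flip)
  ultimately show ?case
    using Cons.prems by (simp add: Cons.IH mult.assoc)
qed

definition targets :: "nat \<Rightarrow> site list" where
  "targets L = concat (map (\<lambda>k. map (\<lambda>a. (a, k - a)) (filter (\<lambda>a. a \<le> k \<and> k - a < L) [0..<L]))
                          [1..<2 * L - 1])"

lemma whip_eq_fold_block: "whip L \<theta> = fold (block \<theta>) (targets L) (plus_state L)"
  by (simp add: whip_def edges_def targets_def fold_concat fold_map block_def comp_def)

lemma sorted_targets: "sorted_wrt (\<lambda>v w. level v \<le> level w) (targets L)"
  unfolding targets_def by (rule sorted_wrt_concat_map_fibres) (auto simp: level_def)

lemma distinct_targets: "distinct (targets L)"
  unfolding targets_def
  by (rule distinct_concat_map_fibres[where f = level]) (auto simp: level_def distinct_map inj_on_def)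

lemma set_targets: "set (targets L) = sites L - {(0, 0)}"
proof (intro set_eqI iffI)
  fix v assume "v \<in> set (targets L)"
  then obtain k a where "1 \<le> k" "a \<le> k" "k - a < L" "a < L" "v = (a, k - a)"
    unfolding targets_def by auto
  then show "v \<in> sites L - {(0, 0)}"
    by (auto simp: sites_def)
next
  fix v assume v: "v \<in> sites L - {(0, 0)}"
  then have k: "level v \<in> set [1..<2 * L - 1]"
    and a: "fst v \<in> set (filter (\<lambda>a. a \<le> level v \<and> level v - a < L) [0..<L])"
    by (auto simp: sites_def level_def)
  have "v = (fst v, level v - fst v)"
    by (simp add: level_def)
  with a have "v \<in> set (map (\<lambda>a. (a, level v - a)) (filter (\<lambda>a. a \<le> level v \<and> level v - a < L) [0..<L]))"
    by (simp only: set_map) (rule rev_image_eqI)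
  with k show "v \<in> set (targets L)"
    unfolding targets_def set_concat set_map[of _ "[1..<2 * L - 1]"] by blast
qed

lemma length_targets: "length (targets L) = L\<^sup>2 - 1"
  by (simp add: distinct_card[OF distinct_targets, symmetric] set_targets sites_def power2_eq_square
      card_Diff_singleton_if)

section \<open>The boundary operator T and expectation values\<close>

definition bdry_sign :: "nat \<Rightarrow> site set \<Rightarrow> complex" where
  "bdry_sign L s = (\<Prod>i\<in>bdry L. zsign i s)"

lemma Tz_eq_diag_op: "Tz L = diag_op (bdry_sign L)"
  by (simp add: Tz_def Zprod_eq_diag_op bdry_sign_def[abs_def])

lemma finite_bdry: "finite (bdry L)"
  by (rule finite_subset[of _ "sites L"]) (auto simp: bdry_def sites_def)

lemma bdry_sign_flip: "i \<in> bdry L \<Longrightarrow> bdry_sign L (flip i s) = - bdry_sign L s"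
  by (simp add: bdry_sign_def prod_zsign_flip finite_bdry)

lemma cnj_bdry_sign_mult_self: "cnj (bdry_sign L s) * bdry_sign L s = 1"
  by (simp add: bdry_sign_def cnj_prod flip: prod.distrib)

lemma prod_block_sign:
  assumes "2 \<le> L"
  shows "(\<Prod>v\<leftarrow>targets L. block_sign v s) = (-1) ^ (L\<^sup>2 - 1) * bdry_sign L s"
proof -
  define I where "I = {1..<L} \<times> {1..<L}"
  define R\<^sub>1 where "R\<^sub>1 = {0..<L-1} \<times> {1..<L}"
  define R\<^sub>2 where "R\<^sub>2 = {1..<L} \<times> {0..<L-1}"
  define g where "g v = zsign (fst v - 1, snd v) s * zsign (fst v, snd v - 1) s" for v
  have "(\<Prod>v\<leftarrow>targets L. block_sign v s) = (\<Prod>v\<in>set (targets L). block_sign v s)"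
    by (simp add: prod.distinct_set_conv_list distinct_targets)
  also have "\<dots> = (\<Prod>v\<in>set (targets L). - 1 * (if v \<in> I then g v else 1))"
    by (rule prod.cong) (auto simp: block_sign_def g_def I_def set_targets sites_def)
  also have "\<dots> = (\<Prod>v\<in>set (targets L). - 1) * prod g (set (targets L) \<inter> I)"
    by (subst prod.distrib) (simp only: prod.inter_restrict[OF finite_set])
  also have "(\<Prod>v\<in>set (targets L). - 1) = (-1 :: complex) ^ (L\<^sup>2 - 1)"
    by (simp add: distinct_card[OF distinct_targets] length_targets)
  also have "set (targets L) \<inter> I = I"
    by (auto simp: set_targets I_def sites_def)
  also have "prod g I = (\<Prod>v\<in>R\<^sub>1. zsign v s) * (\<Prod>v\<in>R\<^sub>2. zsign v s)"
  proof -
    have "(\<Prod>v\<in>I. zsign (fst v - 1, snd v) s) = (\<Prod>v\<in>R\<^sub>1. zsign v s)"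
      by (rule prod.reindex_bij_witness[of _ "\<lambda>v. (fst v + 1, snd v)" "\<lambda>v. (fst v - 1, snd v)"])
        (auto simp: I_def R\<^sub>1_def)
    moreover have "(\<Prod>v\<in>I. zsign (fst v, snd v - 1) s) = (\<Prod>v\<in>R\<^sub>2. zsign v s)"
      by (rule prod.reindex_bij_witness[of _ "\<lambda>v. (fst v, snd v + 1)" "\<lambda>v. (fst v, snd v - 1)"])
        (auto simp: I_def R\<^sub>2_def)
    ultimately show ?thesis
      by (simp add: g_def prod.distrib)
  qed
  also have "\<dots> = (\<Prod>v\<in>sym_diff R\<^sub>1 R\<^sub>2. zsign v s)"
    by (rule prod_mult_prod_sym_diff) (auto simp: R\<^sub>1_def R\<^sub>2_def)
  also have "sym_diff R\<^sub>1 R\<^sub>2 = bdry L"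
    using assms by (auto simp: R\<^sub>1_def R\<^sub>2_def bdry_def sites_def)
  finally show ?thesis
    by (simp add: bdry_sign_def)
qed

definition pi_shift_sign :: "nat \<Rightarrow> site set \<Rightarrow> complex" where
  "pi_shift_sign L s = (-1) ^ (L\<^sup>2 - 1) * bdry_sign L s"

lemma cnj_pi_shift_sign_mult_self: "cnj (pi_shift_sign L s) * pi_shift_sign L s = 1"
  using cnj_bdry_sign_mult_self[of L s]
  by (simp add: pi_shift_sign_def algebra_simps flip: power_mult_distrib)

lemma pi_shift_sign_flip: "i \<in> bdry L \<Longrightarrow> pi_shift_sign L (flip i s) = - pi_shift_sign L s"
  by (simp add: pi_shift_sign_def bdry_sign_flip)

lemma whip_add_pi:
  assumes "2 \<le> L"
  shows "whip L (\<theta> + pi) = diag_op (pi_shift_sign L) (whip L \<theta>)"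
proof -
  have "whip L (\<theta> + pi) = fold (block (\<theta> + pi)) (targets L) (diag_op (\<lambda>_. 1) (plus_state L))"
    by (simp add: whip_eq_fold_block diag_op_def)
  also have "\<dots> = diag_op (\<lambda>s. 1 * (\<Prod>v\<leftarrow>targets L. block_sign v s)) (whip L \<theta>)"
    by (simp add: fold_block_add_pi sorted_targets set_targets whip_eq_fold_block)
  finally show ?thesis
    using assms by (simp add: prod_block_sign pi_shift_sign_def[abs_def])
qed

lemma whip_add_pi_Tz: "2 \<le> L \<Longrightarrow> whip L (\<theta> + pi) = smult_op ((-1) ^ (L\<^sup>2 - 1)) (Tz L) (whip L \<theta>)"
  by (simp add: whip_add_pi Tz_eq_diag_op pi_shift_sign_def smult_op_def diag_op_def mult.assoc)

lemma bdry'_subset_bdry: "2 \<le> L \<Longrightarrow> bdry' L \<subseteq> bdry L"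
  by (auto simp: bdry'_def bdry_def sites_def)

lemma dX_diag_op_anticommute:
  assumes "\<And>i s. i \<in> bdry' L \<Longrightarrow> \<tau> (flip i s) = - \<tau> s"
  shows "dX L (diag_op \<tau> \<psi>) = diag_op (\<lambda>s. - \<tau> s) (dX L \<psi>)"
proof (rule ext)
  fix s
  have "dX L (diag_op \<tau> \<psi>) s = (\<Sum>i\<in>bdry' L. - \<tau> s * pauliX i \<psi> s)"
    unfolding dX_def by (rule sum.cong) (simp_all add: pauliX_def diag_op_def assms)
  then show "dX L (diag_op \<tau> \<psi>) s = diag_op (\<lambda>s. - \<tau> s) (dX L \<psi>) s"
    by (simp add: dX_def diag_op_def sum_distrib_left)
qed

lemma Tz_dX_anticommute:
  assumes "2 \<le> L"
  shows "Tz L \<circ> dX L = smult_op (-1) (dX L \<circ> Tz L)"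
proof -
  have "dX L (Tz L \<psi>) = diag_op (\<lambda>s. - bdry_sign L s) (dX L \<psi>)" for \<psi>
    unfolding Tz_eq_diag_op
    by (rule dX_diag_op_anticommute) (use bdry'_subset_bdry[OF assms] in \<open>auto simp: bdry_sign_flip\<close>)
  then show ?thesis
    by (simp add: fun_eq_iff Tz_eq_diag_op smult_op_def diag_op_def)
qed

lemma expect_diag_op:
  assumes "\<And>s. cnj (\<tau> s) * \<tau> s = 1" and "A (diag_op \<tau> \<psi>) = diag_op (\<lambda>s. \<epsilon> * \<tau> s) (A \<psi>)"
  shows "expect L A (diag_op \<tau> \<psi>) = \<epsilon> * expect L A \<psi>"
proof -
  have "cnj (\<tau> s * \<psi> s) * (\<epsilon> * \<tau> s * A \<psi> s) = \<epsilon> * (cnj (\<psi> s) * A \<psi> s)" for s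
    using assms(1)[of s] by (simp add: algebra_simps)
  then show ?thesis
    unfolding expect_def assms(2) unfolding diag_op_def sum_distrib_left by (intro sum.cong refl)
qed

lemma expect_dX_whip_add_pi:
  assumes "2 \<le> L"
  shows "expect L (dX L) (whip L (\<theta> + pi)) = - expect L (dX L) (whip L \<theta>)"
proof -
  have "dX L (diag_op (pi_shift_sign L) \<psi>) = diag_op (\<lambda>s. - pi_shift_sign L s) (dX L \<psi>)" for \<psi>
    by (rule dX_diag_op_anticommute) (use bdry'_subset_bdry[OF assms] in \<open>auto simp: pi_shift_sign_flip\<close>)
  then have "expect L (dX L) (diag_op (pi_shift_sign L) (whip L \<theta>)) = -1 * expect L (dX L) (whip L \<theta>)"
    by (intro expect_diag_op cnj_pi_shift_sign_mult_self) simp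
  then show ?thesis
    using assms by (simp add: whip_add_pi)
qed

lemma expect_pauliZ_pauliZ_whip_add_pi:
  assumes "2 \<le> L"
  shows "expect L (pauliZ i \<circ> pauliZ j) (whip L (\<theta> + pi)) = expect L (pauliZ i \<circ> pauliZ j) (whip L \<theta>)"
proof -
  have "expect L (pauliZ i \<circ> pauliZ j) (diag_op (pi_shift_sign L) (whip L \<theta>))
          = 1 * expect L (pauliZ i \<circ> pauliZ j) (whip L \<theta>)"
    by (intro expect_diag_op cnj_pi_shift_sign_mult_self)
      (simp add: pauliZ_eq_diag_op diag_op_diag_op mult_ac)
  then show ?thesis
    using assms by (simp add: whip_add_pi)
qed

theorem mainTheorem11:
  fixes L :: nat
  assumes "L \<ge> 2"
  shows "(\<forall>\<theta>::real. \<exists>\<phi>::real.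
            whip L (\<theta> + pi) = smult_op (exp (\<i> * complex_of_real \<phi>)) (Tz L) (whip L \<theta>))
       \<and> bdry' L \<subseteq> bdry L
       \<and> Tz L \<circ> dX L = smult_op (-1) (dX L \<circ> Tz L)
       \<and> (\<forall>\<theta>::real. expect L (dX L) (whip L (\<theta> + pi)) = - expect L (dX L) (whip L \<theta>))
       \<and> (\<forall>\<theta>::real. \<forall>i\<in>sites L. \<forall>j\<in>sites L.
            expect L (pauliZ i \<circ> pauliZ j) (whip L (\<theta> + pi))
              = expect L (pauliZ i \<circ> pauliZ j) (whip L \<theta>))"
proof (intro conjI allI ballI)
  show "\<exists>\<phi>::real. whip L (\<theta> + pi) = smult_op (exp (\<i> * complex_of_real \<phi>)) (Tz L) (whip L \<theta>)"
    for \<theta>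
    by (rule exI[of _ "real (L\<^sup>2 - 1) * pi"]) (simp only: exp_i_times_nat_pi whip_add_pi_Tz[OF assms])
qed (use assms in \<open>simp_all add: bdry'_subset_bdry Tz_dX_anticommute expect_dX_whip_add_pi
                                  expect_pauliZ_pauliZ_whip_add_pi\<close>)

end
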